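(* Let $M$ and $N$ be weight sequences satisfying $\mu_k\le\nu_k$ for all $k$ and $$\exists C>0\ \forall k\in\mathbb{N}_{>0}:\ \sum_{\ell\ge k}\frac1{\nu_\ell}\le C\frac{k}{\mu_k}.$$ Then there is $C'>0$ such that $\int_1^\infty\frac{\omega_N(tu)}{u^2}du\le C'\omega_M(t)+C'$ for all $t>0$.
   Context: A weight sequence is given by an increasing sequence $1=\mu_0\le\mu_1\le\cdots$ via $M_k=\mu_0\cdots\mu_k$, with $M_k^{1/k}\to\infty$; analogously $\nu\leftrightarrow N$. $\omega_M(t)=\sup_{k\in\mathbb{N}}\log(t^k/M_k)$ for $t>0$. *)

theory Defs
  imports "HOL-Analysis.Analysis"
begin

definition wseq :: "(nat \<Rightarrow> real) \<Rightarrow> nat \<Rightarrow> real" where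
  "wseq \<mu> k = (\<Prod>i\<le>k. \<mu> i)"

definition weight_sequence :: "(nat \<Rightarrow> real) \<Rightarrow> bool" where
  "weight_sequence \<mu> \<longleftrightarrow> \<mu> 0 = 1 \<and> mono \<mu> \<and>
     filterlim (\<lambda>k. wseq \<mu> k powr (1 / real k)) at_top sequentially"

definition omega :: "(nat \<Rightarrow> real) \<Rightarrow> real \<Rightarrow> real" where
  "omega \<mu> t = (SUP k. ln (t ^ k / wseq \<mu> k))"

end

theory Submission imports Defs begin

text \<open>omega_M(t) is the sum over i \<ge> 1 of log+ (t / mu i). Integrating termwise, with
  int_1^oo log+ (x u) / u^2 du = log+ x + min 1 x, the integral of omega_N(t u) / u^2 equals
  omega_N(t) + sum_i min 1 (t / nu i). The first term is at most omega_M(t) because mu \<le> nu. In the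
  second, let n be the number of i \<ge> 1 with e mu i \<le> t: each of these contributes log (t / mu i) \<ge> 1
  to omega_M(t), so n \<le> omega_M(t), while the remaining terms add up to at most
  t * sum_(i > n) 1 / nu i \<le> C t (n + 1) / mu (n + 1) \<le> C e (n + 1).\<close>

lemma weight_sequence_ge_1: "weight_sequence \<mu> \<Longrightarrow> 1 \<le> \<mu> i"
  unfolding weight_sequence_def by (metis le0 monoD)

lemma weight_sequence_pos: "weight_sequence \<mu> \<Longrightarrow> 0 < \<mu> i"
  using weight_sequence_ge_1 by (fastforce intro: less_le_trans[OF zero_less_one])

lemma weight_sequence_mono: "weight_sequence \<mu> \<Longrightarrow> i \<le> j \<Longrightarrow> \<mu> i \<le> \<mu> j"
  unfolding weight_sequence_def by (metis monoD)

lemma wseq_eq_prod_Suc: "weight_sequence \<mu> \<Longrightarrow> wseq \<mu> k = (\<Prod>i<k. \<mu> (Suc i))"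
  unfolding wseq_def using prod.atMost_shift[of \<mu> k] by (simp add: weight_sequence_def)

lemma ln_div_wseq:
  assumes "weight_sequence \<mu>" "t > 0"
  shows "ln (t ^ k / wseq \<mu> k) = (\<Sum>i<k. ln (t / \<mu> (Suc i)))"
proof -
  have "t ^ k / wseq \<mu> k = (\<Prod>i<k. t / \<mu> (Suc i))"
    by (simp add: wseq_eq_prod_Suc[OF assms(1)] prod_dividef)
  moreover have "ln (\<Prod>i<k. t / \<mu> (Suc i)) = (\<Sum>i<k. ln (t / \<mu> (Suc i)))"
    using weight_sequence_pos[OF assms(1)] assms(2) by (intro ln_prod) (auto simp: less_imp_neq[symmetric])
  ultimately show ?thesis by simp
qed

lemma weight_sequence_unbounded:
  assumes "weight_sequence \<mu>"
  shows "\<exists>i. B < \<mu> i"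
proof (rule ccontr)
  assume "\<not> ?thesis"
  hence le: "\<mu> i \<le> B" for i by (simp add: not_less)
  have B1: "1 \<le> B" using le[of 0] weight_sequence_ge_1[OF assms] by (meson order_trans)
  have "eventually (\<lambda>k. B < wseq \<mu> k powr (1 / real k)) sequentially"
    using assms unfolding weight_sequence_def by (simp add: filterlim_at_top_dense)
  then obtain k where k: "B < wseq \<mu> k powr (1 / real k)" "k \<ge> 1"
    by (metis (no_types, lifting) eventually_sequentially le_refl max.cobounded1 max.cobounded2)
  have "wseq \<mu> k \<le> B ^ k"
    unfolding wseq_eq_prod_Suc[OF assms]
    using prod_mono[of "{..<k}" "\<lambda>i. \<mu> (Suc i)" "\<lambda>_. B"] weight_sequence_ge_1[OF assms] le
    by (simp add: order_trans[OF zero_le_one])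
  moreover have "wseq \<mu> k > 0"
    unfolding wseq_eq_prod_Suc[OF assms] using weight_sequence_pos[OF assms] by (simp add: prod_pos)
  ultimately have "wseq \<mu> k powr (1 / real k) \<le> (B ^ k) powr (1 / real k)"
    by (intro powr_mono2) auto
  also have "\<dots> = B" using B1 k(2) by (simp add: powr_realpow[symmetric] powr_powr)
  finally show False using k(1) by simp
qed

lemma weight_sequence_threshold:
  assumes "weight_sequence \<mu>"
  obtains n where "\<And>i. i < n \<Longrightarrow> \<mu> (Suc i) \<le> s" and "s < \<mu> (Suc n)"
proof -
  obtain i where "s < \<mu> i" using weight_sequence_unbounded[OF assms] by blast
  then have "s < \<mu> (Suc i)"
    using weight_sequence_mono[OF assms, of i "Suc i"] by simp
  then obtain n where "s < \<mu> (Suc n)" "\<forall>m<n. \<not> s < \<mu> (Suc m)"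
    using exists_least_iff[of "\<lambda>n. s < \<mu> (Suc n)"] by blast
  then show ?thesis using that by (meson not_less)
qed

lemma ln_div_weight_sequence_eventually_nonpos:
  assumes "weight_sequence \<mu>" "t > 0"
  obtains K where "\<And>i. K \<le> i \<Longrightarrow> ln (t / \<mu> (Suc i)) \<le> 0"
proof -
  obtain K where K: "t < \<mu> (Suc K)" using weight_sequence_threshold[OF assms(1)] by blast
  have "ln (t / \<mu> (Suc i)) \<le> 0" if "K \<le> i" for i
  proof -
    have "\<mu> (Suc K) \<le> \<mu> (Suc i)" using weight_sequence_mono[OF assms(1)] that by simp
    then have "t / \<mu> (Suc i) \<le> 1"
      using K weight_sequence_pos[OF assms(1), of "Suc i"] by (simp add: divide_le_eq_1)
    then show ?thesis using assms(2) weight_sequence_pos[OF assms(1)] by simp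
  qed
  then show ?thesis using that by blast
qed

lemma sum_max_0_antimono_eq_sum_prefix:
  fixes a :: "nat \<Rightarrow> real"
  assumes "antimono a"
  shows "\<exists>p. (\<Sum>i<k. max 0 (a i)) = (\<Sum>i<p. a i)"
proof (induction k)
  case 0
  show ?case by (intro exI[of _ 0]) simp
next
  case (Suc k)
  then obtain p where p: "(\<Sum>i<k. max 0 (a i)) = (\<Sum>i<p. a i)" by blast
  show ?case
  proof (cases "a k \<le> 0")
    case True
    then show ?thesis using p by (intro exI[of _ p]) simp
  next
    case False
    then have "0 < a i" if "i \<le> k" for i using antimonoD[OF assms that] by simp
    then show ?thesis by (intro exI[of _ "Suc k"] sum.cong) (auto simp: less_Suc_eq_le)
  qed
qed

lemma ln_div_wseq_le_sum_pos:
  assumes "weight_sequence \<mu>" "t > 0" and tail: "\<And>i. K \<le> i \<Longrightarrow> ln (t / \<mu> (Suc i)) \<le> 0"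
  shows "ln (t ^ k / wseq \<mu> k) \<le> (\<Sum>i<K. max 0 (ln (t / \<mu> (Suc i))))"
proof -
  let ?g = "\<lambda>i. max 0 (ln (t / \<mu> (Suc i)))"
  have "ln (t ^ k / wseq \<mu> k) = (\<Sum>i<k. ln (t / \<mu> (Suc i)))" by (rule ln_div_wseq[OF assms(1,2)])
  also have "\<dots> \<le> (\<Sum>i<k. ?g i)" by (intro sum_mono) simp
  also have "\<dots> \<le> (\<Sum>i<max k K. ?g i)" by (intro sum_mono2) auto
  also have "\<dots> = (\<Sum>i<K. ?g i)" by (intro sum.mono_neutral_right) (auto simp: tail)
  finally show ?thesis .
qed

lemma ln_div_wseq_le_omega:
  assumes "weight_sequence \<mu>" "t > 0"
  shows "ln (t ^ k / wseq \<mu> k) \<le> omega \<mu> t"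
proof -
  obtain K where "\<And>i. K \<le> i \<Longrightarrow> ln (t / \<mu> (Suc i)) \<le> 0"
    using ln_div_weight_sequence_eventually_nonpos[OF assms] by blast
  then have "ln (t ^ k / wseq \<mu> k) \<le> (\<Sum>i<K. max 0 (ln (t / \<mu> (Suc i))))" for k
    by (rule ln_div_wseq_le_sum_pos[OF assms])
  then have "bdd_above (range (\<lambda>k. ln (t ^ k / wseq \<mu> k)))" by (rule bdd_aboveI2)
  then show ?thesis unfolding omega_def by (intro cSUP_upper) auto
qed

lemma omega_nonneg: "weight_sequence \<mu> \<Longrightarrow> t > 0 \<Longrightarrow> 0 \<le> omega \<mu> t"
  using ln_div_wseq_le_omega[of \<mu> t 0] by (simp add: wseq_def weight_sequence_def)

text \<open>Since ln (t / mu i) decreases in i, the supremum is attained at the last k with mu k \<le> t.\<close>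
lemma omega_eq_sum_ln_pos:
  assumes "weight_sequence \<mu>" "t > 0" and tail: "\<And>i. K \<le> i \<Longrightarrow> ln (t / \<mu> (Suc i)) \<le> 0"
  shows "omega \<mu> t = (\<Sum>i<K. max 0 (ln (t / \<mu> (Suc i))))"
proof (rule antisym)
  show "omega \<mu> t \<le> (\<Sum>i<K. max 0 (ln (t / \<mu> (Suc i))))"
    unfolding omega_def by (intro cSUP_least ln_div_wseq_le_sum_pos[OF assms]) auto
  have "antimono (\<lambda>i. ln (t / \<mu> (Suc i)))"
    using assms(2) weight_sequence_pos[OF assms(1)] weight_sequence_mono[OF assms(1)]
    by (intro antimonoI) (simp add: frac_le)
  then obtain p where "(\<Sum>i<K. max 0 (ln (t / \<mu> (Suc i)))) = (\<Sum>i<p. ln (t / \<mu> (Suc i)))"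
    using sum_max_0_antimono_eq_sum_prefix by blast
  then show "(\<Sum>i<K. max 0 (ln (t / \<mu> (Suc i)))) \<le> omega \<mu> t"
    using ln_div_wseq[OF assms(1,2), of p] ln_div_wseq_le_omega[OF assms(1,2), of p] by simp
qed

lemma ennreal_omega_eq_suminf:
  assumes "weight_sequence \<mu>" "t > 0"
  shows "ennreal (omega \<mu> t) = (\<Sum>i. ennreal (max 0 (ln (t / \<mu> (Suc i)))))"
proof -
  obtain K where tail: "\<And>i. K \<le> i \<Longrightarrow> ln (t / \<mu> (Suc i)) \<le> 0"
    using ln_div_weight_sequence_eventually_nonpos[OF assms] by blast
  have "(\<Sum>i. ennreal (max 0 (ln (t / \<mu> (Suc i))))) = (\<Sum>i<K. ennreal (max 0 (ln (t / \<mu> (Suc i)))))"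
    using tail by (intro suminf_finite) (auto simp: not_less)
  then show ?thesis by (simp add: omega_eq_sum_ln_pos[OF assms tail])
qed

lemma omega_antimono:
  assumes "weight_sequence \<mu>" "weight_sequence \<nu>" "\<And>k. \<mu> k \<le> \<nu> k" "t > 0"
  shows "omega \<nu> t \<le> omega \<mu> t"
  unfolding omega_def
proof (rule cSUP_least)
  fix k
  have "ln (t ^ k / wseq \<nu> k) = (\<Sum>i<k. ln (t / \<nu> (Suc i)))" by (rule ln_div_wseq[OF assms(2,4)])
  also have "\<dots> \<le> (\<Sum>i<k. ln (t / \<mu> (Suc i)))"
    using assms(3,4) weight_sequence_pos[OF assms(1)] weight_sequence_pos[OF assms(2)]
    by (intro sum_mono) (simp add: frac_le)
  also have "\<dots> = ln (t ^ k / wseq \<mu> k)" by (rule ln_div_wseq[OF assms(1,4), symmetric])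
  also have "\<dots> \<le> (SUP k. ln (t ^ k / wseq \<mu> k))"
    using ln_div_wseq_le_omega[OF assms(1,4)] unfolding omega_def .
  finally show "ln (t ^ k / wseq \<nu> k) \<le> (SUP k. ln (t ^ k / wseq \<mu> k))" .
qed simp

lemma omega_ge_count_small_factors:
  assumes "weight_sequence \<mu>" "t > 0" and small: "\<And>i. i < n \<Longrightarrow> \<mu> (Suc i) \<le> t / exp 1"
  shows "real n \<le> omega \<mu> t"
proof -
  have "real n = (\<Sum>i<n. 1)" by simp
  also have "\<dots> \<le> (\<Sum>i<n. ln (t / \<mu> (Suc i)))"
  proof (intro sum_mono)
    fix i assume "i \<in> {..<n}"
    then have "exp 1 \<le> t / \<mu> (Suc i)"
      using small[of i] weight_sequence_pos[OF assms(1), of "Suc i"] by (simp add: field_simps)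
    then show "1 \<le> ln (t / \<mu> (Suc i))"
      using ln_mono[of "exp 1" "t / \<mu> (Suc i)"] by simp
  qed
  also have "\<dots> = ln (t ^ n / wseq \<mu> n)" by (simp add: ln_div_wseq[OF assms(1,2)])
  also have "\<dots> \<le> omega \<mu> t" by (rule ln_div_wseq_le_omega[OF assms(1,2)])
  finally show ?thesis .
qed

text \<open>The integrand vanishes below a = max 1 (1 / x), and -(ln (x u) + 1) / u is a primitive.\<close>
lemma nn_integral_ln_pos_div_square:
  fixes x :: real
  assumes x: "x > 0"
  shows "(\<integral>\<^sup>+ u \<in> {1..}. ennreal (max 0 (ln (x * u)) / u\<^sup>2) \<partial>lborel)
          = ennreal (max 0 (ln x) + min 1 x)"
proof -
  define a where "a = max 1 (1 / x)"
  define F where "F u = - (ln (x * u) + 1) / u" for u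
  have a: "a \<ge> 1" "\<And>u. a \<le> u \<longleftrightarrow> 1 \<le> u \<and> 1 \<le> x * u"
    using x unfolding a_def by (auto simp: field_simps)
  have "ennreal (max 0 (ln (x * u)) / u\<^sup>2) * indicator {1..} u
      = ennreal (ln (x * u) / u\<^sup>2) * indicator {a..} u" for u
    using x a(2)[of u] by (cases "1 \<le> u"; cases "1 \<le> x * u") (auto simp: indicator_def)
  then have "(\<integral>\<^sup>+ u \<in> {1..}. ennreal (max 0 (ln (x * u)) / u\<^sup>2) \<partial>lborel)
      = (\<integral>\<^sup>+ u. ennreal (ln (x * u) / u\<^sup>2) * indicator {a..} u \<partial>lborel)"
    by simp
  also have "\<dots> = ennreal (0 - F a)"
  proof (rule nn_integral_FTC_atLeast)
    show "(\<lambda>u. ln (x * u) / u\<^sup>2) \<in> borel_measurable borel" by measurable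
    fix u assume u: "a \<le> u"
    then show "0 \<le> ln (x * u) / u\<^sup>2" using a(2) by simp
    have "((\<lambda>u. - (ln (x * u) + 1) / u) has_real_derivative
        (- (x * 1 / (x * u) + 0) * u - (- (ln (x * u) + 1)) * 1) / (u * u)) (at u)"
      using u a(1) x by (intro derivative_eq_intros) auto
    then show "(F has_real_derivative ln (x * u) / u\<^sup>2) (at u)"
      using u a(1) x unfolding F_def by (simp add: field_simps power2_eq_square)
  next
    have "((\<lambda>u. - (ln u / u) - (ln x + 1) * inverse u) \<longlongrightarrow> - 0 - (ln x + 1) * 0) at_top"
      by (intro tendsto_intros ln_x_over_x_tendsto_0 tendsto_inverse_0_at_top filterlim_ident)
    moreover have "eventually (\<lambda>u. - (ln u / u) - (ln x + 1) * inverse u = F u) at_top"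
      using eventually_gt_at_top[of 0]
      by eventually_elim (use x in \<open>simp add: F_def ln_mult field_simps\<close>)
    ultimately show "(F \<longlongrightarrow> 0) at_top" by (simp add: Lim_transform_eventually)
  qed
  also have "0 - F a = max 0 (ln x) + min 1 x"
    using x unfolding a_def F_def by (cases "1 \<le> x") (auto simp: max_def min_def field_simps)
  finally show ?thesis .
qed

lemma nn_integral_omega_div_square:
  assumes "weight_sequence \<nu>" "t > 0"
  shows "(\<integral>\<^sup>+ u \<in> {1..}. ennreal (omega \<nu> (t * u) / u\<^sup>2) \<partial>lborel)
          = ennreal (omega \<nu> t) + (\<Sum>i. ennreal (min 1 (t / \<nu> (Suc i))))"
proof -
  let ?x = "\<lambda>i. t / \<nu> (Suc i)"
  have x_pos: "0 < ?x i" for i using assms(2) weight_sequence_pos[OF assms(1)] by simp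
  have pointwise: "ennreal (omega \<nu> (t * u) / u\<^sup>2) = (\<Sum>i. ennreal (max 0 (ln (?x i * u)) / u\<^sup>2))"
    if "1 \<le> u" for u
  proof -
    have tu: "0 < t * u" using assms(2) that by simp
    have "ennreal (omega \<nu> (t * u) / u\<^sup>2) = ennreal (omega \<nu> (t * u)) * ennreal (1 / u\<^sup>2)"
      using omega_nonneg[OF assms(1) tu] by (simp add: ennreal_mult'[symmetric])
    also have "\<dots> = (\<Sum>i. ennreal (max 0 (ln (t * u / \<nu> (Suc i)))) * ennreal (1 / u\<^sup>2))"
      by (simp only: ennreal_omega_eq_suminf[OF assms(1) tu] ennreal_suminf_multc)
    also have "\<dots> = (\<Sum>i. ennreal (max 0 (ln (?x i * u)) / u\<^sup>2))"
      by (simp add: ennreal_mult'[symmetric])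
    finally show ?thesis .
  qed
  have "(\<integral>\<^sup>+ u \<in> {1..}. ennreal (omega \<nu> (t * u) / u\<^sup>2) \<partial>lborel)
      = (\<integral>\<^sup>+ u. (\<Sum>i. ennreal (max 0 (ln (?x i * u)) / u\<^sup>2) * indicator {1..} u) \<partial>lborel)"
  proof (intro nn_integral_cong)
    fix u :: real
    show "ennreal (omega \<nu> (t * u) / u\<^sup>2) * indicator {1..} u
        = (\<Sum>i. ennreal (max 0 (ln (?x i * u)) / u\<^sup>2) * indicator {1..} u)"
      by (cases "1 \<le> u") (simp_all only: ennreal_suminf_multc pointwise, simp)
  qed
  also have "\<dots> = (\<Sum>i. \<integral>\<^sup>+ u \<in> {1..}. ennreal (max 0 (ln (?x i * u)) / u\<^sup>2) \<partial>lborel)"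
    by (intro nn_integral_suminf) measurable
  also have "\<dots> = (\<Sum>i. ennreal (max 0 (ln (?x i)) + min 1 (?x i)))"
    by (simp only: nn_integral_ln_pos_div_square[OF x_pos])
  also have "\<dots> = (\<Sum>i. ennreal (max 0 (ln (?x i))) + ennreal (min 1 (?x i)))"
    using x_pos by (simp add: less_imp_le)
  also have "\<dots> = ennreal (omega \<nu> t) + (\<Sum>i. ennreal (min 1 (?x i)))"
    by (simp add: suminf_add[symmetric] ennreal_omega_eq_suminf[OF assms])
  finally show ?thesis .
qed

lemma suminf_min_one_div_le:
  fixes \<nu> :: "nat \<Rightarrow> real"
  assumes "\<And>i. 0 < \<nu> i" "0 \<le> t" "0 \<le> B"
    and tail: "(\<Sum>l. ennreal (1 / \<nu> (l + Suc n))) \<le> ennreal B"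
  shows "(\<Sum>i. ennreal (min 1 (t / \<nu> (Suc i)))) \<le> ennreal (real n + t * B)"
proof -
  have "(\<Sum>j. ennreal (min 1 (t / \<nu> (Suc (j + n))))) \<le> (\<Sum>j. ennreal t * ennreal (1 / \<nu> (j + Suc n)))"
  proof (intro suminf_le)
    fix j
    have "ennreal (min 1 (t / \<nu> (Suc (j + n)))) \<le> ennreal (t * (1 / \<nu> (j + Suc n)))"
      by (intro ennreal_leI) simp
    then show "ennreal (min 1 (t / \<nu> (Suc (j + n)))) \<le> ennreal t * ennreal (1 / \<nu> (j + Suc n))"
      using assms(2) by (simp only: ennreal_mult')
  qed auto
  also have "\<dots> \<le> ennreal t * ennreal B" using tail by (simp add: mult_left_mono)
  finally have "(\<Sum>j. ennreal (min 1 (t / \<nu> (Suc (j + n))))) \<le> ennreal (t * B)"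
    using assms(2) by (simp only: ennreal_mult')
  moreover have "(\<Sum>j<n. ennreal (min 1 (t / \<nu> (Suc j)))) \<le> ennreal (real n)"
    using sum_mono[of "{..<n}" "\<lambda>j. ennreal (min 1 (t / \<nu> (Suc j)))" "\<lambda>_. 1"]
    by (simp add: ennreal_of_nat_eq_real_of_nat)
  ultimately show ?thesis
    using assms(2,3) by (subst suminf_offset[of _ n]) (auto simp: add.commute intro: add_mono)
qed

lemma suminf_min_one_div_le_omega:
  assumes "weight_sequence \<mu>" "weight_sequence \<nu>" "C \<ge> 0" "t > 0"
    and tail: "\<And>k. k \<ge> 1 \<Longrightarrow> (\<Sum>l. ennreal (1 / \<nu> (l + k))) \<le> ennreal (C * real k / \<mu> k)"
  shows "(\<Sum>i. ennreal (min 1 (t / \<nu> (Suc i)))) \<le> ennreal ((1 + C * exp 1) * omega \<mu> t + C * exp 1)"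
proof -
  obtain n where small: "\<And>i. i < n \<Longrightarrow> \<mu> (Suc i) \<le> t / exp 1" and large: "t / exp 1 < \<mu> (Suc n)"
    using weight_sequence_threshold[OF assms(1)] by blast
  have n_le: "real n \<le> omega \<mu> t" by (rule omega_ge_count_small_factors[OF assms(1,4) small])
  have "t / \<mu> (Suc n) \<le> exp 1"
    using large weight_sequence_pos[OF assms(1), of "Suc n"] by (simp add: field_simps)
  then have "t / \<mu> (Suc n) * (C * (real n + 1)) \<le> exp 1 * (C * (real n + 1))"
    using assms(3) by (intro mult_right_mono) auto
  then have "real n + t * (C * real (Suc n) / \<mu> (Suc n)) \<le> real n + C * exp 1 * (real n + 1)"
    by (simp add: field_simps)
  also have "\<dots> \<le> (1 + C * exp 1) * omega \<mu> t + C * exp 1"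
    using mult_left_mono[OF n_le, of "C * exp 1"] n_le assms(3) by (simp add: algebra_simps)
  finally have bound: "real n + t * (C * real (Suc n) / \<mu> (Suc n)) \<le> (1 + C * exp 1) * omega \<mu> t + C * exp 1" .
  have "(\<Sum>i. ennreal (min 1 (t / \<nu> (Suc i)))) \<le> ennreal (real n + t * (C * real (Suc n) / \<mu> (Suc n)))"
    using assms(3,4) tail[of "Suc n"] weight_sequence_pos[OF assms(1), of "Suc n"]
    by (intro suminf_min_one_div_le weight_sequence_pos[OF assms(2)]) auto
  also have "\<dots> \<le> ennreal ((1 + C * exp 1) * omega \<mu> t + C * exp 1)"
    using bound by (rule ennreal_leI)
  finally show ?thesis .
qed

theorem lemma5p7:
  fixes \<mu> \<nu> :: "nat \<Rightarrow> real"
  assumes "weight_sequence \<mu>" and "weight_sequence \<nu>"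
    and "\<And>k. \<mu> k \<le> \<nu> k"
    and "\<exists>C>0. \<forall>k\<ge>1. (\<Sum>l. ennreal (1 / \<nu> (l + k))) \<le> ennreal (C * real k / \<mu> k)"
  shows "\<exists>C'>0. \<forall>t>0.
    (\<integral>\<^sup>+ u \<in> {1..}. ennreal (omega \<nu> (t * u) / u\<^sup>2) \<partial>lborel)
      \<le> ennreal (C' * omega \<mu> t + C')"
proof -
  obtain C where C: "C > 0" "\<And>k. k \<ge> 1 \<Longrightarrow> (\<Sum>l. ennreal (1 / \<nu> (l + k))) \<le> ennreal (C * real k / \<mu> k)"
    using assms(4) by blast
  define C' where "C' = 2 + C * exp 1"
  have "(\<integral>\<^sup>+ u \<in> {1..}. ennreal (omega \<nu> (t * u) / u\<^sup>2) \<partial>lborel) \<le> ennreal (C' * omega \<mu> t + C')"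
    if t: "t > 0" for t
  proof -
    have "(\<integral>\<^sup>+ u \<in> {1..}. ennreal (omega \<nu> (t * u) / u\<^sup>2) \<partial>lborel)
        = ennreal (omega \<nu> t) + (\<Sum>i. ennreal (min 1 (t / \<nu> (Suc i))))"
      by (rule nn_integral_omega_div_square[OF assms(2) t])
    also have "\<dots> \<le> ennreal (omega \<mu> t) + ennreal ((1 + C * exp 1) * omega \<mu> t + C * exp 1)"
      using omega_antimono[OF assms(1-3) t] suminf_min_one_div_le_omega[OF assms(1,2) _ t C(2)] C(1)
      by (intro add_mono ennreal_leI) auto
    also have "\<dots> \<le> ennreal (C' * omega \<mu> t + C')"
      using omega_nonneg[OF assms(1) t] C(1) unfolding C'_def by (simp add: algebra_simps flip: ennreal_plus)
    finally show ?thesis .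
  qed
  moreover have "C' > 0" using C(1) unfolding C'_def by (simp add: add_pos_nonneg)
  ultimately show ?thesis by blast
qed

end
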